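(* Let $T=(V_T,E_T)$ be a finite tree, $r\in V_T$, $Q\subseteq V_T$ non-empty, and $Q'=Q\cup A_Q$ as defined below. Every $Q'$-centroid decomposition tree of $T$ has height $O(\log|Q|)$.
   Context: Root $T$ at $r$, let $V_Q$ be the set of nodes whose subtree contains a node of $Q$, $T_Q$ the subtree induced by $V_Q$, $A_Q=\{u\in V_Q:\deg_{T_Q}(u)\ge 3\}$ and $Q'=Q\cup A_Q$. For a tree $Z$ and $W\subseteq V_Z$, a node $u\in W$ is a $W$-centroid of $Z$ if every component of $Z-u$ contains at most $|W|/2$ nodes of $W$. A $Q'$-centroid decomposition tree $\mathcal D(T)=(Q',E_D)$ is obtained recursively: starting with $Z=T$ and $W=Q'$, choose a $W$-centroid $c$ of $Z$, remove it, and recurse on every component $Z'$ of $Z-c$ that contains a node of $W$ (with $W\cap V(Z')$ in place of $W$); for every recursion other than the first, $E_D$ contains an edge between the centroid chosen in that recursion and the centroid chosen in the calling recursion. (Such centroids always exist, and at each step there may be two to choose from.) *)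

theory Defs
  imports Complex_Main
begin

definition adj_rel :: "'a set \<Rightarrow> 'a set set \<Rightarrow> ('a \<times> 'a) set" where
  "adj_rel V E = {(a, b). a \<in> V \<and> b \<in> V \<and> {a, b} \<in> E}"

definition connected_in :: "'a set \<Rightarrow> 'a set set \<Rightarrow> 'a \<Rightarrow> 'a \<Rightarrow> bool" where
  "connected_in V E x y \<longleftrightarrow> x \<in> V \<and> y \<in> V \<and> (x, y) \<in> (adj_rel V E)\<^sup>*"

definition is_graph :: "'a set \<Rightarrow> 'a set set \<Rightarrow> bool" where
  "is_graph V E \<longleftrightarrow> finite V \<and> (\<forall>e\<in>E. \<exists>a b. a \<in> V \<and> b \<in> V \<and> a \<noteq> b \<and> e = {a, b})"

(* a tree: nonempty finite graph, connected and acyclic (every edge is a bridge) *)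
definition is_tree :: "'a set \<Rightarrow> 'a set set \<Rightarrow> bool" where
  "is_tree V E \<longleftrightarrow> is_graph V E \<and> V \<noteq> {} \<and>
     (\<forall>x\<in>V. \<forall>y\<in>V. connected_in V E x y) \<and>
     (\<forall>a b. {a, b} \<in> E \<longrightarrow> \<not> connected_in V (E - {{a, b}}) a b)"

definition component :: "'a set \<Rightarrow> 'a set set \<Rightarrow> 'a \<Rightarrow> 'a set" where
  "component V E x = {y. connected_in V E x y}"

definition components :: "'a set \<Rightarrow> 'a set set \<Rightarrow> 'a set set" where
  "components V E = component V E ` V"

definition del_vertex_V :: "'a set \<Rightarrow> 'a \<Rightarrow> 'a set" where
  "del_vertex_V V u = V - {u}"

definition del_vertex_E :: "'a set set \<Rightarrow> 'a \<Rightarrow> 'a set set" where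
  "del_vertex_E E u = {e \<in> E. u \<notin> e}"

definition induced_E :: "'a set set \<Rightarrow> 'a set \<Rightarrow> 'a set set" where
  "induced_E E S = {e \<in> E. e \<subseteq> S}"

(* rooted at r: v lies in the subtree of u iff u lies on the r-v path *)
definition in_subtree :: "'a set \<Rightarrow> 'a set set \<Rightarrow> 'a \<Rightarrow> 'a \<Rightarrow> 'a \<Rightarrow> bool" where
  "in_subtree V E r u v \<longleftrightarrow> u \<in> V \<and> v \<in> V \<and>
     (u = r \<or> u = v \<or> \<not> connected_in (del_vertex_V V u) (del_vertex_E E u) r v)"

definition VQ :: "'a set \<Rightarrow> 'a set set \<Rightarrow> 'a \<Rightarrow> 'a set \<Rightarrow> 'a set" where
  "VQ V E r Q = {u \<in> V. \<exists>q\<in>Q. in_subtree V E r u q}"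

definition degree_in :: "'a set set \<Rightarrow> 'a \<Rightarrow> nat" where
  "degree_in E u = card {e \<in> E. u \<in> e}"

definition AQ :: "'a set \<Rightarrow> 'a set set \<Rightarrow> 'a \<Rightarrow> 'a set \<Rightarrow> 'a set" where
  "AQ V E r Q = {u \<in> VQ V E r Q. degree_in (induced_E E (VQ V E r Q)) u \<ge> 3}"

definition Qprime :: "'a set \<Rightarrow> 'a set set \<Rightarrow> 'a \<Rightarrow> 'a set \<Rightarrow> 'a set" where
  "Qprime V E r Q = Q \<union> AQ V E r Q"

definition is_centroid :: "'a set \<Rightarrow> 'a set set \<Rightarrow> 'a set \<Rightarrow> 'a \<Rightarrow> bool" where
  "is_centroid V E W u \<longleftrightarrow> u \<in> W \<and>
     (\<forall>C \<in> components (del_vertex_V V u) (del_vertex_E E u). 2 * card (C \<inter> W) \<le> card W)"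

(* cdt V E W c D: D is an edge set on W forming a W-centroid decomposition tree of
   Z = (V, E), whose first chosen centroid (root) is c. *)
inductive cdt :: "'a set \<Rightarrow> 'a set set \<Rightarrow> 'a set \<Rightarrow> 'a \<Rightarrow> 'a set set \<Rightarrow> bool" where
  step: "\<lbrakk> is_centroid V E W c;
           \<forall>C \<in> {C \<in> components (del_vertex_V V c) (del_vertex_E E c). C \<inter> W \<noteq> {}}.
              cdt C (induced_E E C) (W \<inter> C) (rt C) (ed C) \<rbrakk>
         \<Longrightarrow> cdt V E W c
               (\<Union>C \<in> {C \<in> components (del_vertex_V V c) (del_vertex_E E c). C \<inter> W \<noteq> {}}.
                   insert {c, rt C} (ed C))"

definition is_walk :: "'a set set \<Rightarrow> 'a list \<Rightarrow> bool" where
  "is_walk D p \<longleftrightarrow> p \<noteq> [] \<and> (\<forall>i. Suc i < length p \<longrightarrow> {p ! i, p ! Suc i} \<in> D)"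

definition dist :: "'a set set \<Rightarrow> 'a \<Rightarrow> 'a \<Rightarrow> nat" where
  "dist D x y = (LEAST n. \<exists>p. is_walk D p \<and> hd p = x \<and> last p = y \<and> length p = Suc n)"

definition tree_height :: "'a set \<Rightarrow> 'a set set \<Rightarrow> 'a \<Rightarrow> nat" where
  "tree_height W D c = Max ((\<lambda>v. dist D c v) ` W)"

end

theory Submission
  imports Defs
begin

(* Along a root-to-node path of a W-centroid decomposition tree, every step passes from a
   W-centroid into one component of the rest of the tree, so the number of nodes of W at least
   halves; hence 2 ^ height <= |Q'|.  To bound |A_Q|, root T at r: a node of degree >= 3 in T_Q
   has at least two children in V_Q, and a node of V_Q without children in V_Q lies in Q or is r.
   The child sets being disjoint, nodes with at least two children are no more numerous than
   nodes with none, so |A_Q| <= |Q| + 1, |Q'| <= 4 |Q| and height <= 2 + log2 |Q|. *)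

lemma card_branching_le_card_leaves:
  fixes S :: "'a set" and ch :: "'a \<Rightarrow> 'a set"
  assumes "finite S" and ch_sub: "\<And>u. u \<in> S \<Longrightarrow> ch u \<subseteq> S"
    and disj: "\<forall>u\<in>S. \<forall>v\<in>S. u \<noteq> v \<longrightarrow> ch u \<inter> ch v = {}"
  shows "card {u \<in> S. 2 \<le> card (ch u)} \<le> card {u \<in> S. ch u = {}}"
proof -
  let ?B = "{u \<in> S. 2 \<le> card (ch u)}" and ?L = "{u \<in> S. ch u = {}}"
  have fin_ch: "finite (ch u)" if "u \<in> S" for u
    using that ch_sub \<open>finite S\<close> finite_subset by blast
  have "(\<Sum>u\<in>S. card (ch u)) = card (\<Union>u\<in>S. ch u)"
    using \<open>finite S\<close> fin_ch disj by (simp add: card_UN_disjoint)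
  also have "\<dots> \<le> card S"
    using \<open>finite S\<close> ch_sub by (intro card_mono) auto
  finally have sum_ch: "(\<Sum>u\<in>S. card (ch u)) \<le> card S" .
  have "(\<Sum>u\<in>S. of_bool (u \<in> ?B) + 1) \<le> (\<Sum>u\<in>S. card (ch u) + of_bool (u \<in> ?L))"
  proof (intro sum_mono)
    fix u assume "u \<in> S"
    then show "of_bool (u \<in> ?B) + 1 \<le> card (ch u) + of_bool (u \<in> ?L)"
      using fin_ch[of u] by (cases "card (ch u)") auto
  qed
  then have "card ?B + card S \<le> (\<Sum>u\<in>S. card (ch u)) + card ?L"
    using \<open>finite S\<close>
    by (simp only: sum.distrib sum_of_bool_eq Collect_mem_eq) (simp add: Int_absorb1)
  with sum_ch show ?thesis by linarith
qed

lemma rtrancl_first_hit: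
  assumes "(a, b) \<in> R\<^sup>*" "a \<noteq> u"
  shows "(a, b) \<in> {(p, q) \<in> R. p \<noteq> u \<and> q \<noteq> u}\<^sup>* \<or>
         (\<exists>x. (a, x) \<in> {(p, q) \<in> R. p \<noteq> u \<and> q \<noteq> u}\<^sup>* \<and> (x, u) \<in> R)"
  using assms(1)
proof (induction rule: rtrancl_induct)
  case base
  then show ?case by simp
next
  case (step y z)
  let ?R' = "{(p, q) \<in> R. p \<noteq> u \<and> q \<noteq> u}"
  have "y \<noteq> u" if "(a, y) \<in> ?R'\<^sup>*"
    using that assms(2) by (cases rule: rtranclE) auto
  with step show ?case
    by (cases "z = u") (auto intro: rtrancl_into_rtrancl)
qed

lemma connected_in_sym: "connected_in V E x y \<Longrightarrow> connected_in V E y x"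
proof -
  have "sym ((adj_rel V E)\<^sup>*)"
    by (intro sym_rtrancl) (auto simp: sym_def adj_rel_def insert_commute)
  then show "connected_in V E x y \<Longrightarrow> connected_in V E y x"
    unfolding connected_in_def by (meson symD)
qed

lemma connected_in_trans:
  "connected_in V E x y \<Longrightarrow> connected_in V E y z \<Longrightarrow> connected_in V E x z"
  unfolding connected_in_def by auto

lemma connected_in_refl: "x \<in> V \<Longrightarrow> connected_in V E x x"
  unfolding connected_in_def by auto

lemma connected_in_edge: "{a, b} \<in> E \<Longrightarrow> a \<in> V \<Longrightarrow> b \<in> V \<Longrightarrow> connected_in V E a b"
  unfolding connected_in_def by (auto simp: adj_rel_def)

abbreviation connected_avoiding :: "'a set \<Rightarrow> 'a set set \<Rightarrow> 'a \<Rightarrow> 'a \<Rightarrow> 'a \<Rightarrow> bool" where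
  "connected_avoiding V E u a b \<equiv> connected_in (del_vertex_V V u) (del_vertex_E E u) a b"

lemma connected_avoiding_iff:
  "connected_avoiding V E u a b \<longleftrightarrow> a \<in> V \<and> b \<in> V \<and> a \<noteq> u \<and> b \<noteq> u \<and>
     (a, b) \<in> {(p, q) \<in> adj_rel V E. p \<noteq> u \<and> q \<noteq> u}\<^sup>*"
proof -
  have "adj_rel (del_vertex_V V u) (del_vertex_E E u) = {(p, q) \<in> adj_rel V E. p \<noteq> u \<and> q \<noteq> u}"
    by (auto simp: adj_rel_def del_vertex_V_def del_vertex_E_def)
  then show ?thesis
    by (auto simp: connected_in_def del_vertex_V_def)
qed

lemma connected_avoiding_edge:
  "{a, b} \<in> E \<Longrightarrow> a \<in> V \<Longrightarrow> b \<in> V \<Longrightarrow> a \<noteq> u \<Longrightarrow> b \<noteq> u \<Longrightarrow> connected_avoiding V E u a b"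
  by (rule connected_in_edge) (auto simp: del_vertex_V_def del_vertex_E_def)

lemma connected_avoiding_refl: "a \<in> V \<Longrightarrow> a \<noteq> u \<Longrightarrow> connected_avoiding V E u a a"
  by (rule connected_in_refl) (simp add: del_vertex_V_def)

lemma connected_avoidingD:
  "connected_avoiding V E u a b \<Longrightarrow> a \<in> V \<and> b \<in> V \<and> a \<noteq> u \<and> b \<noteq> u"
  by (simp add: connected_avoiding_iff)

lemma connected_avoiding_imp_connected_Diff_edge:
  assumes "connected_avoiding V E u a b" "u \<in> e"
  shows "connected_in V (E - {e}) a b"
proof -
  have "adj_rel (del_vertex_V V u) (del_vertex_E E u) \<subseteq> adj_rel V (E - {e})"
    using assms(2) by (auto simp: adj_rel_def del_vertex_V_def del_vertex_E_def)
  with assms(1) show ?thesis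
    unfolding connected_in_def by (auto simp: del_vertex_V_def dest: rtrancl_mono[THEN subsetD, rotated])
qed

lemma connected_last_edge:
  assumes "connected_in V E a v" "a \<noteq> v"
  obtains x where "{x, v} \<in> E" "x \<in> V" "connected_avoiding V E v a x"
proof -
  let ?R' = "{(p, q) \<in> adj_rel V E. p \<noteq> v \<and> q \<noteq> v}"
  have "(a, v) \<notin> ?R'\<^sup>*"
    using assms(2) by (auto elim: rtranclE)
  with rtrancl_first_hit[of a v "adj_rel V E" v] assms
  obtain x where "(a, x) \<in> ?R'\<^sup>*" "(x, v) \<in> adj_rel V E"
    unfolding connected_in_def by blast
  moreover from this have "x \<noteq> v" "a \<in> V"
    using assms by (auto simp: connected_in_def adj_rel_def elim: rtranclE)
  ultimately show ?thesis
    using that assms(2) by (auto simp: connected_avoiding_iff adj_rel_def)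
qed

lemma connected_avoiding_through:
  assumes "connected_avoiding V E x a b" "\<not> connected_avoiding V E u a b" "a \<noteq> u"
  shows "connected_avoiding V E x u b"
proof -
  let ?Rx = "{(p, q) \<in> adj_rel V E. p \<noteq> x \<and> q \<noteq> x}"
  let ?Rxu = "{(p, q) \<in> ?Rx. p \<noteq> u \<and> q \<noteq> u}"
  have ab: "a \<in> V" "b \<in> V" "a \<noteq> x" "b \<noteq> x" "(a, b) \<in> ?Rx\<^sup>*"
    using assms(1) by (auto simp: connected_avoiding_iff)
  show ?thesis
  proof (cases "b = u")
    case True
    with ab show ?thesis by (simp add: connected_avoiding_refl)
  next
    case False
    have "?Rxu \<subseteq> {(p, q) \<in> adj_rel V E. p \<noteq> u \<and> q \<noteq> u}" by auto
    then have "(a, b) \<notin> ?Rxu\<^sup>*"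
      using assms(2,3) ab False by (auto simp: connected_avoiding_iff dest: rtrancl_mono[THEN subsetD, rotated])
    then obtain y where y: "(a, y) \<in> ?Rxu\<^sup>*" "(y, u) \<in> ?Rx"
      using rtrancl_first_hit[OF ab(5) assms(3)] by blast
    have "?Rxu\<^sup>* \<subseteq> ?Rx\<^sup>*" by (rule rtrancl_mono) auto
    with y have "(a, u) \<in> ?Rx\<^sup>*" by (blast intro: rtrancl_into_rtrancl)
    then have "connected_avoiding V E x a u"
      using ab by (auto simp: connected_avoiding_iff adj_rel_def elim: rtranclE)
    with assms(1) show ?thesis by (meson connected_in_sym connected_in_trans)
  qed
qed

definition parent :: "'a set \<Rightarrow> 'a set set \<Rightarrow> 'a \<Rightarrow> 'a \<Rightarrow> 'a" where
  "parent V E r v = (SOME x. {x, v} \<in> E \<and> connected_avoiding V E v r x)"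

(* r is excluded because parent V E r r is an arbitrary value. *)
definition children :: "'a set \<Rightarrow> 'a set set \<Rightarrow> 'a \<Rightarrow> 'a set \<Rightarrow> 'a \<Rightarrow> 'a set" where
  "children V E r S u = {v \<in> S. v \<noteq> r \<and> parent V E r v = u}"

context
  fixes V :: "'a set" and E :: "'a set set" and r :: 'a
  assumes tree: "is_tree V E" and root: "r \<in> V"
begin

lemma tree_connected: "x \<in> V \<Longrightarrow> y \<in> V \<Longrightarrow> connected_in V E x y"
  using tree by (simp add: is_tree_def)

lemma tree_finite: "finite V"
  using tree by (simp add: is_tree_def is_graph_def)

lemma tree_edgeD: "{a, b} \<in> E \<Longrightarrow> a \<noteq> b \<and> a \<in> V \<and> b \<in> V"
  using tree unfolding is_tree_def is_graph_def by (force simp: doubleton_eq_iff)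

lemma tree_bridge: "{a, b} \<in> E \<Longrightarrow> \<not> connected_in V (E - {{a, b}}) a b"
  using tree by (simp add: is_tree_def)

lemma parent_spec:
  assumes "v \<in> V" "v \<noteq> r"
  shows "{parent V E r v, v} \<in> E" "connected_avoiding V E v r (parent V E r v)"
proof -
  obtain x where "{x, v} \<in> E" "connected_avoiding V E v r x"
    using connected_last_edge[OF tree_connected[OF root assms(1)] assms(2)[symmetric]] by blast
  then have "{parent V E r v, v} \<in> E \<and> connected_avoiding V E v r (parent V E r v)"
    unfolding parent_def by (rule someI[where P = "\<lambda>x. _ x \<and> _ x", OF conjI])
  then show "{parent V E r v, v} \<in> E" "connected_avoiding V E v r (parent V E r v)" by auto
qed

lemma parent_eqI:
  assumes edge: "{x, v} \<in> E" and conn: "connected_avoiding V E v r x"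
  shows "parent V E r v = x"
proof (rule ccontr)
  let ?p = "parent V E r v"
  assume ne: "?p \<noteq> x"
  have v: "v \<in> V" "v \<noteq> r"
    using tree_edgeD[OF edge] connected_avoidingD[OF conn] by auto
  have "connected_avoiding V E v x ?p"
    using conn parent_spec(2)[OF v] by (meson connected_in_sym connected_in_trans)
  then have "connected_in V (E - {{x, v}}) x ?p"
    by (rule connected_avoiding_imp_connected_Diff_edge) simp
  moreover have "connected_in V (E - {{x, v}}) ?p v"
    using parent_spec(1)[OF v] tree_edgeD[OF parent_spec(1)[OF v]] ne
    by (intro connected_in_edge) (auto simp: doubleton_eq_iff)
  ultimately have "connected_in V (E - {{x, v}}) x v"
    by (rule connected_in_trans)
  with tree_bridge[OF edge] show False by blast
qed

lemma edge_toward_root: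
  assumes edge: "{a, b} \<in> E"
  shows "connected_avoiding V E a r b \<or> connected_avoiding V E b r a"
proof (rule disjCI)
  assume not_ba: "\<not> connected_avoiding V E b r a"
  have ab: "a \<noteq> b" "a \<in> V" "b \<in> V" using tree_edgeD[OF edge] by auto
  then have ar: "a \<noteq> r"
    using not_ba connected_avoiding_refl by metis
  show "connected_avoiding V E a r b"
  proof (cases "b = r")
    case True
    with ab show ?thesis by (simp add: connected_avoiding_refl)
  next
    case False
    let ?x = "parent V E r b"
    have x: "{?x, b} \<in> E" "connected_avoiding V E b r ?x"
      using parent_spec[OF ab(3) False] by auto
    have "?x \<noteq> a" using x(2) not_ba by auto
    show ?thesis
    proof (cases "connected_avoiding V E a r ?x")
      case True
      moreover have "connected_avoiding V E a ?x b"
        using x(1) tree_edgeD[OF x(1)] \<open>?x \<noteq> a\<close> ab by (intro connected_avoiding_edge) auto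
      ultimately show ?thesis by (rule connected_in_trans)
    next
      case False
      have "connected_avoiding V E b a ?x"
        using connected_avoiding_through[OF x(2) False ar[symmetric]] .
      with x(2) have "connected_avoiding V E b r a"
        by (meson connected_in_sym connected_in_trans)
      with not_ba show ?thesis by blast
    qed
  qed
qed

lemma edge_parent_cases:
  assumes "{a, b} \<in> E"
  shows "b \<noteq> r \<and> parent V E r b = a \<or> a \<noteq> r \<and> parent V E r a = b"
  using edge_toward_root[OF assms] assms parent_eqI[of a b] parent_eqI[of b a]
  by (auto simp: insert_commute dest: connected_avoidingD)

lemma degree_induced_le_Suc_card_children:
  assumes "finite S"
  shows "degree_in (induced_E E S) u \<le> Suc (card (children V E r S u))"
proof -
  let ?ch = "children V E r S u"
  have fin_ch: "finite ?ch" using assms by (simp add: children_def)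
  have "{e \<in> induced_E E S. u \<in> e} \<subseteq> insert {u, parent V E r u} ((\<lambda>v. {v, u}) ` ?ch)"
  proof
    fix e assume "e \<in> {e \<in> induced_E E S. u \<in> e}"
    then have e: "e \<in> E" "e \<subseteq> S" "u \<in> e" by (auto simp: induced_E_def)
    then obtain w where w: "e = {u, w}"
      using tree unfolding is_tree_def is_graph_def by (metis insert_commute insertE singletonD)
    with e edge_parent_cases[of u w]
    show "e \<in> insert {u, parent V E r u} ((\<lambda>v. {v, u}) ` ?ch)"
      by (auto simp: children_def insert_commute)
  qed
  then have "degree_in (induced_E E S) u \<le> card (insert {u, parent V E r u} ((\<lambda>v. {v, u}) ` ?ch))"
    unfolding degree_in_def using fin_ch by (intro card_mono) auto
  also have "\<dots> \<le> Suc (card ?ch)"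
    using fin_ch card_image_le[OF fin_ch, of "\<lambda>v. {v, u}"] by (simp add: card_insert_if)
  finally show ?thesis .
qed

lemma children_VQ_nonempty:
  assumes Q: "Q \<subseteq> V" and u: "u \<in> VQ V E r Q" "u \<notin> Q" "u \<noteq> r"
  shows "children V E r (VQ V E r Q) u \<noteq> {}"
proof -
  obtain q where q: "q \<in> Q" "in_subtree V E r u q"
    using u(1) by (auto simp: VQ_def)
  have uq: "u \<in> V" "q \<in> V" "u \<noteq> q" using q Q u by (auto simp: in_subtree_def)
  then have not_ruq: "\<not> connected_avoiding V E u r q"
    using q(2) u(3) by (simp add: in_subtree_def)
  obtain x where x: "{x, u} \<in> E" "x \<in> V" "connected_avoiding V E u q x"
    using connected_last_edge[OF tree_connected[OF uq(2,1)] uq(3)[symmetric]] by blast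
  have "\<not> connected_avoiding V E u r x"
    using x(3) not_ruq by (meson connected_in_sym connected_in_trans)
  then have xru: "connected_avoiding V E x r u"
    using edge_toward_root[OF x(1)] by blast
  then have px: "parent V E r x = u" "x \<noteq> r"
    using parent_eqI[of u x] x(1) connected_avoidingD[OF xru] by (auto simp: insert_commute)
  have "\<not> connected_avoiding V E x r q" if "x \<noteq> q"
  proof
    assume "connected_avoiding V E x r q"
    with xru have "connected_avoiding V E x u q"
      by (meson connected_in_sym connected_in_trans)
    then have "connected_in V (E - {{x, u}}) u q"
      by (rule connected_avoiding_imp_connected_Diff_edge) simp
    moreover have "connected_in V (E - {{x, u}}) q x"
      using x(3) by (rule connected_avoiding_imp_connected_Diff_edge) simp
    ultimately have "connected_in V (E - {{x, u}}) x u"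
      by (meson connected_in_sym connected_in_trans)
    with tree_bridge[OF x(1)] show False ..
  qed
  then have "in_subtree V E r x q"
    using x(2) uq(2) by (auto simp: in_subtree_def)
  then have "x \<in> children V E r (VQ V E r Q) u"
    using q(1) x(2) px by (auto simp: VQ_def children_def)
  then show ?thesis by blast
qed

lemma card_AQ_le:
  assumes Q: "Q \<subseteq> V"
  shows "card (AQ V E r Q) \<le> Suc (card Q)"
proof -
  let ?S = "VQ V E r Q"
  let ?ch = "children V E r ?S"
  have fin_S: "finite ?S"
    using tree_finite by (rule finite_subset[rotated]) (auto simp: VQ_def)
  have fin_Q: "finite Q"
    using Q tree_finite by (rule finite_subset)
  have "AQ V E r Q \<subseteq> {u \<in> ?S. 2 \<le> card (?ch u)}"
  proof
    fix u assume "u \<in> AQ V E r Q"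
    then have "u \<in> ?S" "3 \<le> degree_in (induced_E E ?S) u" by (auto simp: AQ_def)
    with degree_induced_le_Suc_card_children[OF fin_S, of u]
    show "u \<in> {u \<in> ?S. 2 \<le> card (?ch u)}" by simp
  qed
  then have "card (AQ V E r Q) \<le> card {u \<in> ?S. 2 \<le> card (?ch u)}"
    using fin_S by (intro card_mono) auto
  also have "\<dots> \<le> card {u \<in> ?S. ?ch u = {}}"
    using fin_S by (intro card_branching_le_card_leaves) (auto simp: children_def)
  also have "\<dots> \<le> card (insert r Q)"
    using children_VQ_nonempty[OF Q] fin_Q by (intro card_mono) auto
  also have "\<dots> \<le> Suc (card Q)"
    using fin_Q by (simp add: card_insert_if)
  finally show ?thesis .
qed

end

lemma is_walk_Cons: "is_walk D p \<Longrightarrow> {c, hd p} \<in> D \<Longrightarrow> is_walk D (c # p)"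
  unfolding is_walk_def by (auto simp: nth_Cons hd_conv_nth split: nat.split)

lemma is_walk_mono: "is_walk D p \<Longrightarrow> D \<subseteq> D' \<Longrightarrow> is_walk D' p"
  unfolding is_walk_def by blast

lemma dist_le_walk_length:
  "is_walk D p \<Longrightarrow> hd p = x \<Longrightarrow> last p = y \<Longrightarrow> Defs.dist D x y \<le> length p - 1"
  unfolding Defs.dist_def by (rule Least_le) (auto simp: is_walk_def)

lemma cdt_walk_from_root:
  assumes "cdt V E W c D" "W \<subseteq> V" "finite W" "v \<in> W"
  shows "\<exists>p. is_walk D p \<and> hd p = c \<and> last p = v \<and> 2 ^ (length p - 1) \<le> card W"
  using assms
proof (induction arbitrary: v rule: cdt.induct)
  case (step V E W c rt ed)
  let ?Z = "del_vertex_V V c" and ?F = "del_vertex_E E c"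
  let ?CS = "{C \<in> components ?Z ?F. C \<inter> W \<noteq> {}}"
  let ?D = "\<Union>C \<in> ?CS. insert {c, rt C} (ed C)"
  show ?case
  proof (cases "v = c")
    case True
    with step.prems show ?thesis
      by (intro exI[of _ "[c]"]) (auto simp: is_walk_def Suc_le_eq card_gt_0_iff)
  next
    case False
    define C where "C = component ?Z ?F v"
    have "v \<in> ?Z" using False step.prems by (auto simp: del_vertex_V_def)
    then have vC: "v \<in> C" and C: "C \<in> components ?Z ?F"
      by (auto simp: C_def component_def components_def connected_in_def)
    then have "C \<in> ?CS" using step.prems(3) by auto
    moreover have "W \<inter> C \<subseteq> C" "finite (W \<inter> C)" "v \<in> W \<inter> C"
      using vC step.prems by auto
    ultimately obtain p where
      p: "is_walk (ed C) p" "hd p = rt C" "last p = v" "2 ^ (length p - 1) \<le> card (W \<inter> C)"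
      using bspec[OF step.IH \<open>C \<in> ?CS\<close>] by blast
    have "p \<noteq> []" using p(1) by (simp add: is_walk_def)
    have "ed C \<subseteq> ?D" "{c, hd p} \<in> ?D" using \<open>C \<in> ?CS\<close> p(2) by auto
    then have "is_walk ?D (c # p)" by (rule is_walk_Cons[OF is_walk_mono[OF p(1)]])
    moreover have "2 ^ (length (c # p) - 1) \<le> card W"
    proof -
      have "2 ^ (length (c # p) - 1) = 2 * 2 ^ (length p - 1)"
        using \<open>p \<noteq> []\<close> by (cases p) auto
      also have "\<dots> \<le> 2 * card (C \<inter> W)" using p(4) by (simp add: Int_commute)
      also have "\<dots> \<le> card W" using step.hyps(1) C by (simp add: is_centroid_def)
      finally show ?thesis .
    qed
    ultimately show ?thesis using p(3) \<open>p \<noteq> []\<close> by (intro exI[of _ "c # p"]) auto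
  qed
qed

lemma two_power_tree_height_le_card:
  assumes "cdt V E W c D" "W \<subseteq> V" "finite W"
  shows "2 ^ tree_height W D c \<le> card W"
proof -
  have "c \<in> W" using assms(1) by (cases rule: cdt.cases) (simp add: is_centroid_def)
  then have "tree_height W D c \<in> (\<lambda>v. Defs.dist D c v) ` W"
    unfolding tree_height_def using assms(3) by (intro Max_in) auto
  then obtain v where v: "v \<in> W" "tree_height W D c = Defs.dist D c v" by blast
  obtain p where p: "is_walk D p" "hd p = c" "last p = v" "2 ^ (length p - 1) \<le> card W"
    using cdt_walk_from_root[OF assms v(1)] by blast
  have "(2::nat) ^ tree_height W D c \<le> 2 ^ (length p - 1)"
    unfolding v(2) using dist_le_walk_length[OF p(1-3)] by (rule power_increasing) simp
  with p(4) show ?thesis by linarith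
qed

theorem mainTheorem9:
  "\<exists>K::real. \<forall>(V::nat set) E r Q c D.
      is_tree V E \<longrightarrow> r \<in> V \<longrightarrow> Q \<subseteq> V \<longrightarrow> Q \<noteq> {} \<longrightarrow>
      cdt V E (Qprime V E r Q) c D \<longrightarrow>
      real (tree_height (Qprime V E r Q) D c) \<le> K * (1 + log 2 (real (card Q)))"
proof (intro exI[of _ 2] allI impI)
  fix V :: "nat set" and E r Q c D
  assume tree: "is_tree V E" and root: "r \<in> V" and Q: "Q \<subseteq> V" "Q \<noteq> {}"
    and cdt: "cdt V E (Qprime V E r Q) c D"
  let ?W = "Qprime V E r Q" and ?h = "tree_height (Qprime V E r Q) D c"
  have W: "?W \<subseteq> V" "finite ?W"
    using Q tree_finite[OF tree root] by (auto simp: Qprime_def AQ_def VQ_def intro: finite_subset)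
  have card_Q: "1 \<le> card Q"
    using Q finite_subset[OF Q(1) tree_finite[OF tree root]] by (simp add: Suc_le_eq card_gt_0_iff)
  have "2 ^ ?h \<le> card ?W"
    using two_power_tree_height_le_card[OF cdt W] .
  also have "\<dots> \<le> card Q + card (AQ V E r Q)"
    unfolding Qprime_def by (rule card_Un_le)
  also have "\<dots> \<le> 4 * card Q"
    using card_AQ_le[OF tree root Q(1)] card_Q by simp
  finally have "real (2 ^ ?h) \<le> real (4 * card Q)"
    by (simp only: of_nat_le_iff)
  then have "real ?h \<le> log 2 (4 * real (card Q))"
    by (intro le_log_of_power) simp_all
  also have "\<dots> = 2 + log 2 (real (card Q))"
    using card_Q log_pow_cancel[of 2 2] by (simp add: log_mult)
  also have "\<dots> \<le> 2 * (1 + log 2 (real (card Q)))"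
    using card_Q by simp
  finally show "real ?h \<le> 2 * (1 + log 2 (real (card Q)))" .
qed

end
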